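(* Let $A$ be any subset of ${}^\omega\omega$, equipped with the restriction of the usual ultrametric of ${}^\omega\omega$, and let $Y$ be a separable metrizable space. If $f:A\to Y$ is of Baire class $1$, then there is a sequence of full functions $f_k:A\to Y$ converging pointwise to $f$.
   Context: Work in ZF plus countable choice over the reals. ${}^\omega\omega$ is the Baire space with ultrametric $d'(x,y)=2^{-n}$, $n$ least with $x(n)\ne y(n)$. $f:A\to Y$ is of Baire class $1$ if $f^{-1}(U)\in\mathbf{\Sigma}^0_2(A)$ for every open $U\subseteq Y$. A set $B\subseteq A$ is full with constant $r>0$ if $\{y\in A: d'(x,y)<r\}\subseteq B$ for all $x\in B$; a function $g:A\to Y$ is full if it takes only finitely many values and the preimage of each value is full (with some constant). *)

theory Defs
  imports "HOL-Analysis.Analysis"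
begin

definition baire_dist :: "(nat \<Rightarrow> nat) \<Rightarrow> (nat \<Rightarrow> nat) \<Rightarrow> real" where
  "baire_dist x y = (if x = y then 0 else (1/2) ^ (LEAST n. x n \<noteq> y n))"

definition baire_sub_topology :: "(nat \<Rightarrow> nat) set \<Rightarrow> (nat \<Rightarrow> nat) topology" where
  "baire_sub_topology A = Metric_space.mtopology A baire_dist"

definition Sigma02_in :: "(nat \<Rightarrow> nat) set \<Rightarrow> (nat \<Rightarrow> nat) set \<Rightarrow> bool" where
  "Sigma02_in A S \<longleftrightarrow>
     (\<exists>F :: nat \<Rightarrow> (nat \<Rightarrow> nat) set.
        (\<forall>n. closedin (baire_sub_topology A) (F n)) \<and> S = (\<Union>n. F n))"

definition baire_class_1 ::
  "(nat \<Rightarrow> nat) set \<Rightarrow> 'b topology \<Rightarrow> ((nat \<Rightarrow> nat) \<Rightarrow> 'b) \<Rightarrow> bool" where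
  "baire_class_1 A Y f \<longleftrightarrow>
     (\<forall>x\<in>A. f x \<in> topspace Y) \<and>
     (\<forall>U. openin Y U \<longrightarrow> Sigma02_in A {x \<in> A. f x \<in> U})"

definition full_set_const :: "(nat \<Rightarrow> nat) set \<Rightarrow> real \<Rightarrow> (nat \<Rightarrow> nat) set \<Rightarrow> bool" where
  "full_set_const A r B \<longleftrightarrow> B \<subseteq> A \<and> r > 0 \<and>
     (\<forall>x\<in>B. {y \<in> A. baire_dist x y < r} \<subseteq> B)"

definition full_set :: "(nat \<Rightarrow> nat) set \<Rightarrow> (nat \<Rightarrow> nat) set \<Rightarrow> bool" where
  "full_set A B \<longleftrightarrow> (\<exists>r. full_set_const A r B)"

definition full_function ::
  "(nat \<Rightarrow> nat) set \<Rightarrow> 'b topology \<Rightarrow> ((nat \<Rightarrow> nat) \<Rightarrow> 'b) \<Rightarrow> bool" where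
  "full_function A Y g \<longleftrightarrow>
     (\<forall>x\<in>A. g x \<in> topspace Y) \<and> finite (g ` A) \<and>
     (\<forall>v \<in> g ` A. full_set A {x \<in> A. g x = v})"

end

theory Submission
  imports Defs
begin

text \<open>Choose a countable dense set D in Y and write each preimage f\<inverse>(B(z, 1/(i+1))), z \<in> D,
  as a countable union of closed sets; enumerate all these pieces as P l with centre c l and radius
  r l. At stage k a point x sees the indices l \<le> k whose piece comes within the depth-k basic
  neighbourhood of x, keeps those whose ball meets the ball of every earlier visible index, and
  takes the centre of a kept index of least radius. This depends only on x restricted to k, so it
  is full. If x \<in> P l with r l small, then for large k closedness of the finitely many earlier
  pieces makes exactly those containing x visible, so l is kept and the chosen centre lies within
  3 r l of f x.\<close>

lemma baire_dist_less_imp_eq: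
  assumes "baire_dist x y < (1/2)^k" "i \<le> k"
  shows "x i = y i"
proof (rule ccontr)
  assume ne: "x i \<noteq> y i"
  then have "(LEAST n. x n \<noteq> y n) \<le> i" by (rule Least_le)
  then have "(1/2::real)^k \<le> (1/2)^(LEAST n. x n \<noteq> y n)"
    using assms(2) by (intro power_decreasing) auto
  moreover have "baire_dist x y = (1/2)^(LEAST n. x n \<noteq> y n)"
    using ne unfolding baire_dist_def by auto
  ultimately show False using assms(1) by linarith
qed

lemma baire_dist_le_if_agree:
  assumes "\<And>i. i < k \<Longrightarrow> x i = y i"
  shows "baire_dist x y \<le> (1/2)^k"
proof (cases "x = y")
  case False
  then obtain j where "x j \<noteq> y j" by auto
  then have "x (LEAST n. x n \<noteq> y n) \<noteq> y (LEAST n. x n \<noteq> y n)" by (rule LeastI)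
  with assms have "k \<le> (LEAST n. x n \<noteq> y n)" by (meson not_le)
  with False show ?thesis unfolding baire_dist_def by (simp add: power_decreasing)
qed (simp add: baire_dist_def)

lemma Metric_space_baire_dist: "Metric_space A baire_dist"
proof
  fix x y z :: "nat \<Rightarrow> nat"
  show "0 \<le> baire_dist x y" "baire_dist x y = 0 \<longleftrightarrow> x = y"
    by (simp_all add: baire_dist_def)
  show "baire_dist x y = baire_dist y x"
    unfolding baire_dist_def by (simp add: eq_commute)
  show "baire_dist x z \<le> baire_dist x y + baire_dist y z"
  proof (cases "x = z")
    case False
    then obtain j where "x j \<noteq> z j" by auto
    define n where "n = (LEAST n. x n \<noteq> z n)"
    have "x n \<noteq> z n" unfolding n_def using \<open>x j \<noteq> z j\<close> by (rule LeastI)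
    then have "(1/2)^n \<le> baire_dist x y \<or> (1/2)^n \<le> baire_dist y z"
      using baire_dist_less_imp_eq[of x y n n] baire_dist_less_imp_eq[of y z n n] by fastforce
    moreover have "0 \<le> baire_dist x y" "0 \<le> baire_dist y z"
      by (simp_all add: baire_dist_def)
    moreover have "baire_dist x z = (1/2)^n"
      using False by (simp add: baire_dist_def n_def)
    ultimately show ?thesis by linarith
  qed (simp add: baire_dist_def)
qed

lemma closedin_baire_sub_topology_separates:
  assumes "closedin (baire_sub_topology A) F" "x \<in> A" "x \<notin> F"
  obtains K where "\<And>y. y \<in> F \<Longrightarrow> \<exists>i<K. y i \<noteq> x i"
proof -
  interpret Metric_space A baire_dist by (rule Metric_space_baire_dist)
  have "openin mtopology (A - F)"
    using assms(1) unfolding baire_sub_topology_def closedin_def by simp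
  then obtain \<epsilon> where "\<epsilon> > 0" "mball x \<epsilon> \<subseteq> A - F"
    using assms(2,3) unfolding openin_mtopology by blast
  moreover obtain K where "(1/2::real)^K < \<epsilon>"
    using real_arch_pow_inv[of \<epsilon> "1/2"] \<open>\<epsilon> > 0\<close> by auto
  moreover have "F \<subseteq> A"
    using assms(1) closedin_subset unfolding baire_sub_topology_def by fastforce
  ultimately have "\<exists>i<K. y i \<noteq> x i" if "y \<in> F" for y
    using that assms(2) baire_dist_le_if_agree[of K x y] by fastforce
  then show thesis by (rule that)
qed

definition prefix_determined :: "nat \<Rightarrow> ((nat \<Rightarrow> nat) \<Rightarrow> 'b) \<Rightarrow> bool" where
  "prefix_determined k g \<longleftrightarrow> (\<forall>x y. (\<forall>i<k. x i = y i) \<longrightarrow> g x = g y)"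

lemma full_set_level_set_if_prefix_determined:
  assumes "prefix_determined k g"
  shows "full_set A {x \<in> A. g x = v}"
  unfolding full_set_def full_set_const_def
proof (intro exI conjI ballI subsetI)
  fix x y assume "x \<in> {x \<in> A. g x = v}" "y \<in> {y \<in> A. baire_dist x y < (1/2)^k}"
  moreover have "g x = g y"
    using assms baire_dist_less_imp_eq calculation(2) unfolding prefix_determined_def by fastforce
  ultimately show "y \<in> {x \<in> A. g x = v}" by simp
qed auto

lemma full_function_if_prefix_determined:
  assumes "prefix_determined k g" "\<forall>x\<in>A. g x \<in> topspace Y" "finite (g ` A)"
  shows "full_function A Y g"
  using assms full_set_level_set_if_prefix_determined[OF assms(1)]
  unfolding full_function_def by blast

locale closed_ball_cover = Metric_space M m
  for M :: "'b set" and m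
  and A :: "(nat \<Rightarrow> nat) set" and f :: "(nat \<Rightarrow> nat) \<Rightarrow> 'b"
  and c :: "nat \<Rightarrow> 'b" and r :: "nat \<Rightarrow> real" and P :: "nat \<Rightarrow> (nat \<Rightarrow> nat) set" +
  assumes f_in_M: "x \<in> A \<Longrightarrow> f x \<in> M"
    and c_in_M: "c l \<in> M"
    and closedin_P: "closedin (baire_sub_topology A) (P l)"
    and P_in_ball: "x \<in> P l \<Longrightarrow> m (c l) (f x) < r l"
    and covering: "x \<in> A \<Longrightarrow> \<epsilon> > 0 \<Longrightarrow> \<exists>l. x \<in> P l \<and> r l < \<epsilon>"
begin

definition visible :: "nat \<Rightarrow> (nat \<Rightarrow> nat) \<Rightarrow> nat \<Rightarrow> bool" where
  "visible k x l \<longleftrightarrow> l \<le> k \<and> (\<exists>y\<in>P l. \<forall>i<k. y i = x i)"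

definition admissible :: "nat \<Rightarrow> (nat \<Rightarrow> nat) \<Rightarrow> nat set" where
  "admissible k x =
     {l. visible k x l \<and> (\<forall>l'<l. visible k x l' \<longrightarrow> m (c l) (c l') < r l + r l')}"

definition approx :: "nat \<Rightarrow> (nat \<Rightarrow> nat) \<Rightarrow> 'b" where
  "approx k x = (if admissible k x = {} then c 0 else c (arg_min_on r (admissible k x)))"

lemma finite_admissible: "finite (admissible k x)"
  by (rule finite_subset[of _ "{..k}"]) (auto simp: admissible_def visible_def)

lemma prefix_determined_approx: "prefix_determined k (approx k)"
  unfolding prefix_determined_def
proof (intro allI impI)
  fix x y :: "nat \<Rightarrow> nat" assume "\<forall>i<k. x i = y i"
  then have "visible k x = visible k y" by (auto simp: fun_eq_iff visible_def)
  then have "admissible k x = admissible k y" by (simp add: admissible_def)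
  then show "approx k x = approx k y" by (simp add: approx_def)
qed

lemma approx_in_centres: "approx k x \<in> c ` {..k}"
  using arg_min_if_finite(1)[OF finite_admissible, of k x r]
  by (auto simp: approx_def admissible_def visible_def)

lemma approx_in_M: "approx k x \<in> M"
  using approx_in_centres[of k x] c_in_M by auto

lemma full_function_approx: "full_function A mtopology (approx k)"
proof (rule full_function_if_prefix_determined[OF prefix_determined_approx])
  show "\<forall>x\<in>A. approx k x \<in> topspace mtopology"
    using approx_in_M by simp
  show "finite (approx k ` A)"
    using approx_in_centres by (meson finite_atMost finite_imageI finite_subset image_subsetI)
qed

lemma eventually_visible_iff:
  assumes "x \<in> A"
  shows "\<forall>\<^sub>F k in sequentially. \<forall>l\<in>{..L}. visible k x l \<longleftrightarrow> x \<in> P l"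
proof -
  have "\<forall>\<^sub>F k in sequentially. visible k x l \<longleftrightarrow> x \<in> P l" for l
  proof (cases "x \<in> P l")
    case True
    then show ?thesis
      unfolding visible_def eventually_sequentially by blast
  next
    case False
    then obtain K where "\<And>y. y \<in> P l \<Longrightarrow> \<exists>i<K. y i \<noteq> x i"
      using closedin_baire_sub_topology_separates[OF closedin_P assms] by metis
    then show ?thesis
      unfolding visible_def eventually_sequentially
      by (metis False less_le_trans)
  qed
  then show ?thesis by (simp add: eventually_ball_finite)
qed

lemma eventually_approx_near:
  assumes "x \<in> A" "x \<in> P l"
  shows "\<forall>\<^sub>F k in sequentially. m (approx k x) (f x) < 3 * r l"
  using eventually_visible_iff[OF assms(1), of l]
proof (rule eventually_mono)
  fix k assume vis: "\<forall>l'\<in>{..l}. visible k x l' \<longleftrightarrow> x \<in> P l'"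
  have near: "m (c l') (f x) < r l'" if "x \<in> P l'" for l'
    using P_in_ball that .
  have "l \<in> admissible k x"
    unfolding admissible_def
  proof (intro CollectI conjI allI impI)
    show "visible k x l" using vis assms(2) by simp
    fix l' assume "l' < l" "visible k x l'"
    then have "x \<in> P l'" using vis by simp
    have "m (c l) (c l') \<le> m (c l) (f x) + m (f x) (c l')"
      using triangle c_in_M f_in_M assms(1) by blast
    also have "\<dots> < r l + r l'"
      using near[OF assms(2)] near[OF \<open>x \<in> P l'\<close>] commute[of "f x" "c l'"] by linarith
    finally show "m (c l) (c l') < r l + r l'" .
  qed
  then have ne: "admissible k x \<noteq> {}" by auto
  define s where "s = arg_min_on r (admissible k x)"
  have s: "s \<in> admissible k x" "r s \<le> r l"
    using arg_min_if_finite[OF finite_admissible ne, of r] \<open>l \<in> admissible k x\<close>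
    unfolding s_def by (auto simp: not_less)
  have approx: "approx k x = c s" using ne by (simp add: approx_def s_def)
  have "r l > 0" using near[OF assms(2)] nonneg[of "c l" "f x"] by linarith
  show "m (approx k x) (f x) < 3 * r l"
  proof (cases "s \<le> l")
    case True
    then have "x \<in> P s" using vis s(1) by (simp add: admissible_def)
    then show ?thesis unfolding approx using near s(2) \<open>r l > 0\<close> by fastforce
  next
    case False
    then have "m (c s) (c l) < r s + r l"
      using s(1) vis assms(2) by (auto simp: admissible_def)
    moreover have "m (c s) (f x) \<le> m (c s) (c l) + m (c l) (f x)"
      using triangle c_in_M f_in_M assms(1) by blast
    ultimately show ?thesis unfolding approx using near[OF assms(2)] s(2) by linarith
  qed
qed

lemma limitin_approx:
  assumes "x \<in> A"
  shows "limitin mtopology (\<lambda>k. approx k x) (f x) sequentially"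
  unfolding limitin_metric
proof (intro conjI allI impI)
  show "f x \<in> M" using f_in_M assms .
  fix \<epsilon> :: real assume "\<epsilon> > 0"
  then obtain l where "x \<in> P l" "r l < \<epsilon> / 3"
    using covering assms by (meson divide_pos_pos zero_less_numeral)
  from eventually_approx_near[OF assms \<open>x \<in> P l\<close>]
  show "\<forall>\<^sub>F k in sequentially. approx k x \<in> M \<and> m (approx k x) (f x) < \<epsilon>"
    by (rule eventually_mono) (use approx_in_M \<open>r l < \<epsilon> / 3\<close> in auto)
qed

end

lemma (in Metric_space) closed_ball_cover_exists:
  assumes "separable_space mtopology" "baire_class_1 A mtopology f" "A \<noteq> {}"
  obtains c r P where "closed_ball_cover M d A f c r P"
proof -
  have f_in_M: "f x \<in> M" if "x \<in> A" for x
    using assms(2) that by (simp add: baire_class_1_def)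
  obtain D where D: "countable D" "D \<subseteq> M" "mtopology closure_of D = M"
    using assms(1) unfolding separable_space_def by auto
  have dense: "\<exists>z\<in>D. d z y < \<epsilon>" if "y \<in> M" "\<epsilon> > 0" for y \<epsilon>
    using D(3) that unfolding metric_closure_of by (force simp: commute)
  obtain a where "a \<in> A" using assms(3) by blast
  then have "D \<noteq> {}" using dense[of "f a" 1] f_in_M by auto
  have "\<forall>z i. Sigma02_in A {x \<in> A. f x \<in> mball z (inverse (Suc i))}"
    using assms(2) openin_mball unfolding baire_class_1_def by blast
  then obtain F :: "'a \<Rightarrow> nat \<Rightarrow> nat \<Rightarrow> (nat \<Rightarrow> nat) set"
    where F: "\<And>z i n. closedin (baire_sub_topology A) (F z i n)"
    and F_Union: "\<And>z i. {x \<in> A. f x \<in> mball z (inverse (Suc i))} = (\<Union>n. F z i n)"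
    unfolding Sigma02_in_def by metis
  define t where "t = from_nat_into (D \<times> (UNIV :: nat set) \<times> (UNIV :: nat set))"
  have range_t: "range t = D \<times> UNIV \<times> UNIV"
    using D(1) \<open>D \<noteq> {}\<close> by (simp add: t_def)
  define c where "c l = fst (t l)" for l
  define r where "r l = inverse (real (Suc (fst (snd (t l)))))" for l
  define P where "P l = F (fst (t l)) (fst (snd (t l))) (snd (snd (t l)))" for l
  show thesis
  proof (rule that, intro closed_ball_cover.intro closed_ball_cover_axioms.intro)
    show "Metric_space M d" by unfold_locales
    show "f x \<in> M" if "x \<in> A" for x using f_in_M that .
    show "c l \<in> M" for l
    proof -
      have "t l \<in> D \<times> UNIV \<times> UNIV" using range_t by (metis rangeI)
      then show ?thesis using D(2) by (auto simp: c_def)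
    qed
    show "closedin (baire_sub_topology A) (P l)" for l
      by (simp add: P_def F)
    show "d (c l) (f x) < r l" if "x \<in> P l" for l x
      using that F_Union by (force simp: P_def c_def r_def)
    show "\<exists>l. x \<in> P l \<and> r l < \<epsilon>" if x: "x \<in> A" and "\<epsilon> > 0" for x \<epsilon>
    proof -
      obtain i where i: "inverse (real (Suc i)) < \<epsilon>"
        using reals_Archimedean[OF \<open>\<epsilon> > 0\<close>] by auto
      obtain z where "z \<in> D" "d z (f x) < inverse (real (Suc i))"
        using dense[of "f x" "inverse (real (Suc i))"] f_in_M[OF x] by auto
      then have "x \<in> {x \<in> A. f x \<in> mball z (inverse (Suc i))}"
        using D(2) f_in_M x by auto
      then obtain n where "x \<in> F z i n"
        unfolding F_Union by blast
      moreover obtain l where "t l = (z, i, n)"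
        using range_t \<open>z \<in> D\<close> by (metis UNIV_I mem_Sigma_iff rangeE)
      ultimately have "x \<in> P l \<and> r l < \<epsilon>"
        using i by (simp add: P_def r_def)
      then show ?thesis ..
    qed
  qed
qed

theorem mainTheorem14:
  fixes A :: "(nat \<Rightarrow> nat) set"
    and Y :: "'b topology"
    and f :: "(nat \<Rightarrow> nat) \<Rightarrow> 'b"
  assumes "separable_space Y" and "metrizable_space Y"
    and "baire_class_1 A Y f"
  shows "\<exists>fk :: nat \<Rightarrow> (nat \<Rightarrow> nat) \<Rightarrow> 'b.
           (\<forall>k. full_function A Y (fk k)) \<and>
           (\<forall>x\<in>A. limitin Y (\<lambda>k. fk k x) (f x) sequentially)"
proof (cases "A = {}")
  case True
  show ?thesis
    by (rule exI[of _ "\<lambda>k x. undefined"]) (simp add: True full_function_def)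
next
  case False
  obtain M m where "Metric_space M m" and Y: "Y = Metric_space.mtopology M m"
    using assms(2) unfolding metrizable_space_def by blast
  then interpret Metric_space M m by simp
  obtain c r P where "closed_ball_cover M m A f c r P"
    using closed_ball_cover_exists assms(1,3) False unfolding Y by metis
  then interpret closed_ball_cover M m A f c r P .
  show ?thesis
    unfolding Y using full_function_approx limitin_approx by blast
qed

end
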